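(* Let $L\in\mathbb{R}^{m\times m}$ satisfy $\|\mathrm{e}^{\omega L}\|_\infty\le1$ for all $\omega>0$, and let $\rho>0$ and $f$ satisfy: there exists $\omega_0^+>0$ with $|\xi+\omega f(\xi)|\le\rho$ for all $\xi\in[-\rho,\rho]$, $\omega\in(0,\omega_0^+]$, and there exists $\omega_0^->0$ with $|\xi-\omega f(\xi)|\le\rho$ for all $\xi\in[-\rho,\rho]$, $\omega\in(0,\omega_0^-]$. Consider the classical fourth-order integrating factor Runge--Kutta scheme $$u^{(1)}=\mathrm{e}^{\frac{\tau}{2}L}u^n+\tfrac{\tau}{2}\mathrm{e}^{\frac{\tau}{2}L}f(u^n),\qquad u^{(2)}=\mathrm{e}^{\frac{\tau}{2}L}u^n+\tfrac{\tau}{2}f(u^{(1)}),$$ $$u^{(3)}=\mathrm{e}^{\tau L}u^n+\tau\,\mathrm{e}^{\frac{\tau}{2}L}f(u^{(2)}),$$ $$u^{n+1}=\mathrm{e}^{\tau L}u^n+\tau\Big(\tfrac16\mathrm{e}^{\tau L}f(u^n)+\tfrac13\mathrm{e}^{\frac{\tau}{2}L}f(u^{(1)})+\tfrac13\mathrm{e}^{\frac{\tau}{2}L}f(u^{(2)})+\tfrac16 f(u^{(3)})\Big).$$ If $\|u^n\|_\infty\le\rho$ and $0<\tau\le\frac23\min\{\omega_0^+,\omega_0^-\}$, then $\|u^{n+1}\|_\infty\le\rho$.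
   Context: $\|\cdot\|_\infty$ is the vector $\infty$-norm and induced matrix norm; $f(u)$ for a vector $u$ is applied componentwise. *)

theory Defs
  imports "HOL-Analysis.Analysis"
begin

primrec mpow :: "real^'n^'n \<Rightarrow> nat \<Rightarrow> real^'n^'n" where
  "mpow A 0 = mat 1"
| "mpow A (Suc k) = A ** mpow A k"

definition mexp :: "real^'n^'n \<Rightarrow> real^'n^'n" where
  "mexp A = (\<chi> i j. (\<Sum>k. (mpow A k) $ i $ j / fact k))"

definition inorm :: "real^'n \<Rightarrow> real" where
  "inorm x = Max (range (\<lambda>i. \<bar>x $ i\<bar>))"

definition mat_inorm :: "real^'n^'n \<Rightarrow> real" where
  "mat_inorm A = Sup {inorm (A *v x) | x. inorm x \<le> 1}"

definition cw :: "(real \<Rightarrow> real) \<Rightarrow> real^'n \<Rightarrow> real^'n" where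
  "cw f u = (\<chi> i. f (u $ i))"

end

theory Submission
  imports Defs
begin

text \<open>With \<open>E = exp(\<tau>L/2)\<close>, so that
\<open>exp(\<tau>L) = E\<^sup>2\<close>, every stage can be rewritten as a convex combination of forward Euler steps
\<open>v \<pm> \<omega> f(v)\<close> with \<open>0 \<le> \<omega> \<le> 3\<tau>/2\<close>, taken from earlier stages and possibly followed by \<open>E\<close>.
Each such Euler step maps the \<open>\<rho>\<close>-ball of the maximum norm into itself, and so does \<open>E\<close>, being
nonexpansive; hence so does every stage.\<close>

lemma inorm_le_iff: "inorm x \<le> r \<longleftrightarrow> (\<forall>i. \<bar>x $ i\<bar> \<le> r)"
  unfolding inorm_def by (subst Max_le_iff) auto

lemma abs_component_le_inorm: "\<bar>x $ i\<bar> \<le> inorm x"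
  unfolding inorm_def by (rule Max_ge) auto

lemma inorm_nonneg: "0 \<le> inorm x"
  using abs_component_le_inorm[of x] abs_ge_zero order_trans by blast

lemma inorm_zero [simp]: "inorm 0 = 0"
  by (intro antisym inorm_nonneg) (simp add: inorm_le_iff)

lemma inorm_eq_0_iff: "inorm x = 0 \<longleftrightarrow> x = 0"
  by (metis abs_component_le_inorm abs_le_zero_iff inorm_zero vec_eq_iff zero_index)

lemma inorm_triangle: "inorm (x + y) \<le> inorm x + inorm y"
  unfolding inorm_le_iff
  by (metis abs_component_le_inorm abs_triangle_ineq add_mono order_trans vector_add_component)

lemma inorm_scaleR: "inorm (c *\<^sub>R x) = \<bar>c\<bar> * inorm x"
proof (rule antisym)
  show "inorm (c *\<^sub>R x) \<le> \<bar>c\<bar> * inorm x"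
    unfolding inorm_le_iff by (simp add: abs_mult abs_component_le_inorm mult_left_mono)
  have "inorm x \<in> range (\<lambda>i. \<bar>x $ i\<bar>)"
    unfolding inorm_def by (rule Max_in) auto
  then obtain i where "inorm x = \<bar>x $ i\<bar>" by auto
  then show "\<bar>c\<bar> * inorm x \<le> inorm (c *\<^sub>R x)"
    using abs_component_le_inorm[of "c *\<^sub>R x" i] by (simp add: abs_mult)
qed

lemma inorm_convex_combination_le:
  assumes "0 \<le> a" "0 \<le> b" "a + b = 1" "inorm x \<le> r" "inorm y \<le> r"
  shows "inorm (a *\<^sub>R x + b *\<^sub>R y) \<le> r"
proof -
  have "inorm (a *\<^sub>R x + b *\<^sub>R y) \<le> a * inorm x + b * inorm y"
    using inorm_triangle[of "a *\<^sub>R x" "b *\<^sub>R y"] by (simp add: inorm_scaleR assms(1,2))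
  also have "\<dots> \<le> a * r + b * r"
    using assms by (intro add_mono mult_left_mono) auto
  finally show ?thesis
    using assms(3) by (simp add: distrib_right[symmetric])
qed

lemma inorm_matrix_vector_le_entry_sum:
  "inorm (A *v x) \<le> (\<Sum>i\<in>UNIV. \<Sum>j\<in>UNIV. \<bar>A $ i $ j\<bar>) * inorm x"
  unfolding inorm_le_iff
proof
  fix i
  have "\<bar>(A *v x) $ i\<bar> \<le> (\<Sum>j\<in>UNIV. \<bar>A $ i $ j\<bar> * inorm x)"
    unfolding matrix_vector_mult_def
    by (auto intro!: order_trans[OF sum_abs] sum_mono
        simp: abs_mult abs_component_le_inorm mult_left_mono)
  also have "\<dots> \<le> (\<Sum>i\<in>UNIV. \<Sum>j\<in>UNIV. \<bar>A $ i $ j\<bar>) * inorm x"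
    unfolding sum_distrib_right[symmetric]
    by (intro mult_right_mono[OF _ inorm_nonneg] member_le_sum[where f="\<lambda>i. \<Sum>j\<in>UNIV. \<bar>A$i$j\<bar>"])
      (auto intro: sum_nonneg)
  finally show "\<bar>(A *v x) $ i\<bar> \<le> (\<Sum>i\<in>UNIV. \<Sum>j\<in>UNIV. \<bar>A $ i $ j\<bar>) * inorm x" .
qed

lemma bdd_above_mat_inorm: "bdd_above {inorm (A *v x) | x. inorm x \<le> 1}"
proof (rule bdd_aboveI)
  fix y assume "y \<in> {inorm (A *v x) | x. inorm x \<le> 1}"
  then obtain x where "y = inorm (A *v x)" "inorm x \<le> 1" by blast
  then show "y \<le> (\<Sum>i\<in>UNIV. \<Sum>j\<in>UNIV. \<bar>A $ i $ j\<bar>)"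
    using inorm_matrix_vector_le_entry_sum[of A x]
    by (smt (verit) mult_left_le sum_nonneg abs_ge_zero)
qed

lemma inorm_matrix_vector_le: "inorm (A *v x) \<le> mat_inorm A * inorm x"
proof (cases "x = 0")
  case False
  then have pos: "inorm x > 0"
    using inorm_nonneg[of x] inorm_eq_0_iff[of x] by linarith
  have "inorm (A *v ((1 / inorm x) *\<^sub>R x)) \<le> mat_inorm A"
    unfolding mat_inorm_def using pos
    by (intro cSup_upper[OF _ bdd_above_mat_inorm]) (auto simp: inorm_scaleR)
  then show ?thesis
    using pos by (simp add: matrix_vector_mult_scaleR inorm_scaleR field_simps)
qed simp

lemma mpow_scaleR: "mpow (c *\<^sub>R A) k = c ^ k *\<^sub>R mpow A k"
  by (induction k) (simp_all add: vec_eq_iff matrix_matrix_mult_def sum_distrib_left algebra_simps)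

lemma mpow_add: "mpow A i ** mpow A j = mpow A (i + j)"
  by (induction i) (simp_all add: matrix_mul_lid, metis matrix_mul_assoc)

lemma abs_mpow_entry_le:
  "\<bar>mpow A k $ i $ j\<bar> \<le> (\<Sum>i\<in>UNIV. \<Sum>j\<in>UNIV. \<bar>A $ i $ j\<bar>) ^ k"
proof (induction k arbitrary: i j)
  case (Suc k)
  let ?C = "\<Sum>i\<in>UNIV. \<Sum>j\<in>UNIV. \<bar>A $ i $ j\<bar>"
  have "\<bar>mpow A (Suc k) $ i $ j\<bar> \<le> (\<Sum>l\<in>UNIV. \<bar>A $ i $ l\<bar> * ?C ^ k)"
    by (auto simp: matrix_matrix_mult_def abs_mult Suc mult_left_mono
        intro!: order_trans[OF sum_abs] sum_mono)
  also have "\<dots> \<le> ?C * ?C ^ k"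
    unfolding sum_distrib_right[symmetric]
    by (intro mult_right_mono member_le_sum[where f="\<lambda>i. \<Sum>j\<in>UNIV. \<bar>A$i$j\<bar>"])
      (auto intro: sum_nonneg simp: sum_nonneg)
  finally show ?case by simp
qed (simp add: mat_def)

lemma mexp_scaleR_entry: "mexp (a *\<^sub>R A) $ i $ j = (\<Sum>k. a ^ k / fact k * mpow A k $ i $ j)"
  by (simp add: mexp_def mpow_scaleR)

lemma summable_mexp_entry: "summable (\<lambda>k. norm (a ^ k / fact k * mpow A k $ i $ j))"
proof (rule summable_comparison_test'[OF summable_exp, where N = 0])
  let ?C = "\<Sum>i\<in>UNIV. \<Sum>j\<in>UNIV. \<bar>A $ i $ j\<bar>"
  fix k :: nat
  have "norm (norm (a ^ k / fact k * mpow A k $ i $ j)) = \<bar>a\<bar> ^ k / fact k * \<bar>mpow A k $ i $ j\<bar>"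
    by (simp add: abs_mult power_abs)
  also have "\<dots> \<le> \<bar>a\<bar> ^ k / fact k * ?C ^ k"
    by (rule mult_left_mono[OF abs_mpow_entry_le]) simp
  also have "\<dots> = inverse (fact k) * (\<bar>a\<bar> * ?C) ^ k"
    by (simp add: power_mult_distrib field_simps)
  finally show "norm (norm (a ^ k / fact k * mpow A k $ i $ j)) \<le> inverse (fact k) * (\<bar>a\<bar> * ?C) ^ k" .
qed

lemma mpow_entry_binomial_convolution:
  "(\<Sum>l\<in>UNIV. \<Sum>p\<le>n. a ^ p / fact p * mpow A p $ i $ l * (b ^ (n - p) / fact (n - p) * mpow A (n - p) $ l $ j))
   = (a + b) ^ n / fact n * mpow A n $ i $ j"
proof -
  have "(\<Sum>l\<in>UNIV. \<Sum>p\<le>n. a ^ p / fact p * mpow A p $ i $ l * (b ^ (n - p) / fact (n - p) * mpow A (n - p) $ l $ j))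
      = (\<Sum>p\<le>n. a ^ p / fact p * (b ^ (n - p) / fact (n - p)) * (mpow A p ** mpow A (n - p)) $ i $ j)"
    by (subst sum.swap) (simp add: matrix_matrix_mult_def sum_distrib_left algebra_simps)
  also have "\<dots> = (\<Sum>p\<le>n. of_nat (n choose p) * a ^ p * b ^ (n - p) / fact n * mpow A n $ i $ j)"
    by (intro sum.cong refl) (simp add: mpow_add binomial_fact field_simps)
  also have "\<dots> = (a + b) ^ n / fact n * mpow A n $ i $ j"
    by (simp add: binomial_ring[of a b n] sum_divide_distrib sum_distrib_right)
  finally show ?thesis .
qed

lemma mexp_scaleR_add: "mexp (a *\<^sub>R A) ** mexp (b *\<^sub>R A) = mexp ((a + b) *\<^sub>R A)"
proof -
  have "(mexp (a *\<^sub>R A) ** mexp (b *\<^sub>R A)) $ i $ j = mexp ((a + b) *\<^sub>R A) $ i $ j" for i j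
  proof -
    define \<alpha> where "\<alpha> l k = a ^ k / fact k * mpow A k $ i $ l" for l k
    define \<beta> where "\<beta> l k = b ^ k / fact k * mpow A k $ l $ j" for l k
    have "(mexp (a *\<^sub>R A) ** mexp (b *\<^sub>R A)) $ i $ j = (\<Sum>l\<in>UNIV. (\<Sum>k. \<alpha> l k) * (\<Sum>k. \<beta> l k))"
      by (simp add: matrix_matrix_mult_def mexp_scaleR_entry \<alpha>_def \<beta>_def)
    also have "\<dots> = (\<Sum>l\<in>UNIV. \<Sum>n. \<Sum>p\<le>n. \<alpha> l p * \<beta> l (n - p))"
      by (intro sum.cong refl Cauchy_product) (simp_all only: \<alpha>_def \<beta>_def summable_mexp_entry)
    also have "\<dots> = (\<Sum>n. \<Sum>l\<in>UNIV. \<Sum>p\<le>n. \<alpha> l p * \<beta> l (n - p))"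
      by (intro suminf_sum[symmetric] summable_Cauchy_product)
        (simp_all only: \<alpha>_def \<beta>_def summable_mexp_entry)
    also have "\<dots> = mexp ((a + b) *\<^sub>R A) $ i $ j"
      by (simp only: \<alpha>_def \<beta>_def mpow_entry_binomial_convolution mexp_scaleR_entry)
    finally show ?thesis .
  qed
  then show ?thesis by (simp add: vec_eq_iff)
qed

lemma inorm_euler_step_cw_le:
  assumes "\<forall>\<xi>\<in>{-\<rho>..\<rho>}. \<forall>\<omega>\<in>{0<..\<omega>\<^sub>0}. \<bar>\<xi> + \<omega> * f \<xi>\<bar> \<le> \<rho>"
    and "inorm v \<le> \<rho>" "0 \<le> \<omega>" "\<omega> \<le> \<omega>\<^sub>0"
  shows "inorm (v + \<omega> *\<^sub>R cw f v) \<le> \<rho>"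
  unfolding inorm_le_iff
proof
  fix i
  have "v $ i \<in> {-\<rho>..\<rho>}"
    using assms(2) abs_component_le_inorm[of v i] by auto
  then show "\<bar>(v + \<omega> *\<^sub>R cw f v) $ i\<bar> \<le> \<rho>"
    using assms by (cases "\<omega> = 0") (auto simp: cw_def)
qed

lemma cw_uminus: "cw (\<lambda>\<xi>. - f \<xi>) v = - cw f v"
  by (simp add: cw_def vec_eq_iff)

text \<open>\<open>E\<close> stands for \<open>exp(\<tau>L/2)\<close> and \<open>F\<close> for the componentwise nonlinearity.\<close>

locale integrating_factor_rk4 =
  fixes E :: "real^'n^'n" and F :: "real^'n \<Rightarrow> real^'n" and \<rho> \<tau> :: real
  assumes E_nonexpansive: "\<And>x. inorm (E *v x) \<le> inorm x"
    and euler_plus: "\<And>v \<omega>. inorm v \<le> \<rho> \<Longrightarrow> 0 \<le> \<omega> \<Longrightarrow> \<omega> \<le> 3/2 * \<tau> \<Longrightarrow> inorm (v + \<omega> *\<^sub>R F v) \<le> \<rho>"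
    and euler_minus: "\<And>v \<omega>. inorm v \<le> \<rho> \<Longrightarrow> 0 \<le> \<omega> \<Longrightarrow> \<omega> \<le> 3/2 * \<tau> \<Longrightarrow> inorm (v - \<omega> *\<^sub>R F v) \<le> \<rho>"
    and tau_pos: "0 < \<tau>"
begin

definition stage1 :: "real^'n \<Rightarrow> real^'n" where
  "stage1 u = E *v u + (\<tau>/2) *\<^sub>R (E *v F u)"

definition stage2 :: "real^'n \<Rightarrow> real^'n" where
  "stage2 u = E *v u + (\<tau>/2) *\<^sub>R F (stage1 u)"

definition stage3 :: "real^'n \<Rightarrow> real^'n" where
  "stage3 u = (E ** E) *v u + \<tau> *\<^sub>R (E *v F (stage2 u))"

definition step :: "real^'n \<Rightarrow> real^'n" where
  "step u = (E ** E) *v u + \<tau> *\<^sub>R ((1/6) *\<^sub>R ((E ** E) *v F u) + (1/3) *\<^sub>R (E *v F (stage1 u))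
             + (1/3) *\<^sub>R (E *v F (stage2 u)) + (1/6) *\<^sub>R F (stage3 u))"

lemma inorm_E_le: "inorm x \<le> \<rho> \<Longrightarrow> inorm (E *v x) \<le> \<rho>"
  using E_nonexpansive order_trans by blast

lemma stage1_eq: "stage1 u = E *v (u + (\<tau>/2) *\<^sub>R F u)"
  by (simp only: stage1_def algebra_simps)

lemma stage2_eq:
  "stage2 u = (1/2) *\<^sub>R (E *v (u - (\<tau>/2) *\<^sub>R F u)) + (1/2) *\<^sub>R (stage1 u + \<tau> *\<^sub>R F (stage1 u))"
  unfolding stage2_def stage1_def by (simp only: algebra_simps) (simp add: scaleR_add_left[symmetric])

lemma stage3_eq:
  "stage3 u = E *v ((2/3) *\<^sub>R (stage2 u + (3/2 * \<tau>) *\<^sub>R F (stage2 u))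
     + (1/3) *\<^sub>R ((3/4) *\<^sub>R (stage1 u - (4/3 * \<tau>) *\<^sub>R F (stage1 u))
                  + (1/4) *\<^sub>R (E *v (u - (3/2 * \<tau>) *\<^sub>R F u))))"
  unfolding stage3_def stage2_def stage1_def
  by (simp only: algebra_simps matrix_vector_mul_assoc) (simp add: scaleR_add_left[symmetric])

lemma step_eq:
  "step u = (1/3) *\<^sub>R (stage3 u + (\<tau>/2) *\<^sub>R F (stage3 u))
     + (2/3) *\<^sub>R (E *v ((1/2) *\<^sub>R stage2 u + (1/2) *\<^sub>R (stage1 u + (\<tau>/2) *\<^sub>R F (stage1 u))))"
proof -
  have "E *v stage1 u = (E ** E) *v u + (\<tau>/2) *\<^sub>R ((E ** E) *v F u)"
    and "E *v stage2 u = (E ** E) *v u + (\<tau>/2) *\<^sub>R (E *v F (stage1 u))"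
    by (simp_all only: stage1_def stage2_def algebra_simps matrix_vector_mul_assoc)
  then show ?thesis
    unfolding step_def stage3_def
    \<comment> \<open>\<open>real^'n\<close> is a ring, so simp folds \<open>x + x\<close> into \<open>2 * x\<close>; \<open>vec_eq_iff\<close> undoes this\<close>
    by (simp only: algebra_simps) (simp add: scaleR_add_left[symmetric] vec_eq_iff)
qed

lemma inorm_stage1_le: "inorm u \<le> \<rho> \<Longrightarrow> inorm (stage1 u) \<le> \<rho>"
  unfolding stage1_eq using tau_pos by (intro inorm_E_le euler_plus) auto

lemma inorm_stage2_le:
  assumes "inorm u \<le> \<rho>"
  shows "inorm (stage2 u) \<le> \<rho>"
  unfolding stage2_eq using assms inorm_stage1_le[OF assms] tau_pos
  by (intro inorm_convex_combination_le inorm_E_le euler_plus euler_minus) auto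

lemma inorm_stage3_le:
  assumes "inorm u \<le> \<rho>"
  shows "inorm (stage3 u) \<le> \<rho>"
  unfolding stage3_eq using assms inorm_stage1_le[OF assms] inorm_stage2_le[OF assms] tau_pos
  by (intro inorm_convex_combination_le inorm_E_le euler_plus euler_minus) auto

lemma inorm_step_le:
  assumes "inorm u \<le> \<rho>"
  shows "inorm (step u) \<le> \<rho>"
  unfolding step_eq
  using inorm_stage1_le[OF assms] inorm_stage2_le[OF assms] inorm_stage3_le[OF assms] tau_pos
  by (intro inorm_convex_combination_le inorm_E_le euler_plus) auto

end

theorem mainTheorem6:
  fixes L :: "real^'m^'m" and f :: "real \<Rightarrow> real"
    and \<rho> \<omega>p \<omega>m \<tau> :: real and un :: "real^'m"
  assumes hL: "\<forall>\<omega>>0. mat_inorm (mexp (\<omega> *\<^sub>R L)) \<le> 1"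
    and h\<rho>: "\<rho> > 0"
    and h\<omega>p: "\<omega>p > 0" "\<forall>\<xi>\<in>{-\<rho>..\<rho>}. \<forall>\<omega>\<in>{0<..\<omega>p}. \<bar>\<xi> + \<omega> * f \<xi>\<bar> \<le> \<rho>"
    and h\<omega>m: "\<omega>m > 0" "\<forall>\<xi>\<in>{-\<rho>..\<rho>}. \<forall>\<omega>\<in>{0<..\<omega>m}. \<bar>\<xi> - \<omega> * f \<xi>\<bar> \<le> \<rho>"
    and hu: "inorm un \<le> \<rho>"
    and h\<tau>: "0 < \<tau>" "\<tau> \<le> 2/3 * min \<omega>p \<omega>m"
  shows "let E2 = mexp ((\<tau>/2) *\<^sub>R L); E1 = mexp (\<tau> *\<^sub>R L);
             u1 = E2 *v un + (\<tau>/2) *\<^sub>R (E2 *v cw f un);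
             u2 = E2 *v un + (\<tau>/2) *\<^sub>R cw f u1;
             u3 = E1 *v un + \<tau> *\<^sub>R (E2 *v cw f u2);
             unew = E1 *v un + \<tau> *\<^sub>R ((1/6) *\<^sub>R (E1 *v cw f un) + (1/3) *\<^sub>R (E2 *v cw f u1)
                      + (1/3) *\<^sub>R (E2 *v cw f u2) + (1/6) *\<^sub>R cw f u3)
         in inorm unew \<le> \<rho>"
proof -
  let ?E = "mexp ((\<tau>/2) *\<^sub>R L)"
  have E_square: "mexp (\<tau> *\<^sub>R L) = ?E ** ?E"
    using mexp_scaleR_add[of "\<tau>/2" L "\<tau>/2"] by simp
  interpret S: integrating_factor_rk4 ?E "cw f" \<rho> \<tau>
  proof
    have "mat_inorm ?E \<le> 1"
      using hL h\<tau>(1) by simp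
    then show "inorm (?E *v x) \<le> inorm x" for x
      using inorm_matrix_vector_le[of ?E x] mult_right_mono[OF _ inorm_nonneg[of x]] by fastforce
    show "inorm (v + \<omega> *\<^sub>R cw f v) \<le> \<rho>" "inorm (v - \<omega> *\<^sub>R cw f v) \<le> \<rho>"
      if "inorm v \<le> \<rho>" "0 \<le> \<omega>" "\<omega> \<le> 3/2 * \<tau>" for v \<omega>
      using inorm_euler_step_cw_le[OF h\<omega>p(2) that(1,2)]
        inorm_euler_step_cw_le[of \<rho> \<omega>m "\<lambda>\<xi>. - f \<xi>", OF _ that(1,2)] h\<omega>m(2) that(3) h\<tau>(2)
      by (auto simp: cw_uminus)
  qed (rule h\<tau>(1))
  show ?thesis
    using S.inorm_step_le[OF hu]
    unfolding Let_def E_square S.step_def S.stage3_def S.stage2_def S.stage1_def .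
qed

end
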